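(* Let $(E,\mathcal{E},\nu)$ be a $\sigma$-finite measure space, $\phi$ a Young function satisfying the $\Delta_2$-condition, $w$ a weight function, and $\Psi:E\to E$ a non-singular measurable transformation inducing the composition operator $C_\Psi f=f\circ\Psi$ on the Orlicz-Lorentz space $L_{(\phi,w)}$. For $m\ge0$ let $\nu_m=\nu\circ\Psi^{-m}$. Then $\mathcal{A}(C_\Psi)=\infty$ if and only if the measures $\nu_m$ and $\nu_{m+1}$ are not equivalent for any natural number $m$.
   Context: A Young function is a convex $\phi:[0,\infty)\to[0,\infty)$ with $\phi(x)=0\iff x=0$ and $\lim_{x\to\infty}\phi(x)=\infty$; $\Delta_2$-condition: $\phi(2x)\le k\phi(x)$ for some $k>0$ and all $x>0$. A weight function is a non-increasing locally integrable $w:(0,\infty)\to(0,\infty)$ with $\int_0^\infty w=\infty$. For measurable $f$, $\nu_f(s)=\nu\{|f|>s\}$, $f^*(t)=\inf\{s>0:\nu_f(s)\le t\}$; $L_{(\phi,w)}$ is the space of measurable $f:E\to\mathbb{C}$ with $\int_0^\infty\phi(\alpha f^*(t))w(t)\,dt<\infty$ for some $\alpha>0$, with the Luxemburg norm. $\Psi$ non-singular: $\nu(\Psi^{-1}(S))=0$ whenever $\nu(S)=0$; $\nu\circ\Psi^{-m}(S)=\nu(\Psi^{-m}(S))$, $\Psi^0=\mathrm{id}$. Measures $\nu_1,\nu_2$ are equivalent if $\nu_1\ll\nu_2\ll\nu_1$. The ascent $\mathcal{A}(T)$ is the smallest integer $m$ with $\mathcal{N}(T^m)=\mathcal{N}(T^{m+1})$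 ($\mathcal{N}$ = kernel), and $\infty$ if no such $m$ exists. *)

theory Defs
  imports "HOL-Analysis.Analysis"
begin

definition young_function :: "(real \<Rightarrow> real) \<Rightarrow> bool" where
  "young_function \<phi> \<longleftrightarrow> convex_on {0..} \<phi> \<and> (\<forall>x\<ge>0. \<phi> x \<ge> 0)
     \<and> (\<forall>x\<ge>0. \<phi> x = 0 \<longleftrightarrow> x = 0) \<and> filterlim \<phi> at_top at_top"

definition delta2 :: "(real \<Rightarrow> real) \<Rightarrow> bool" where
  "delta2 \<phi> \<longleftrightarrow> (\<exists>k>0. \<forall>x>0. \<phi> (2 * x) \<le> k * \<phi> x)"

definition weight_function :: "(real \<Rightarrow> real) \<Rightarrow> bool" where
  "weight_function w \<longleftrightarrow> (\<forall>t>0. w t > 0) \<and> antimono_on {0<..} w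
     \<and> (\<forall>a>0. set_integrable lborel {0<..a} w)
     \<and> set_nn_integral lborel {0<..} (\<lambda>t. ennreal (w t)) = \<infinity>"

definition distrib_fun :: "'a measure \<Rightarrow> ('a \<Rightarrow> complex) \<Rightarrow> real \<Rightarrow> ennreal" where
  "distrib_fun M f s = emeasure M {x \<in> space M. norm (f x) > s}"

text \<open>decreasing rearrangement f^*(t), with value \<infinity> allowed (Inf of the empty set)\<close>
definition decr_rearr :: "'a measure \<Rightarrow> ('a \<Rightarrow> complex) \<Rightarrow> real \<Rightarrow> ereal" where
  "decr_rearr M f t = Inf {ereal s | s. s > 0 \<and> distrib_fun M f s \<le> ennreal t}"

text \<open>Orlicz-Lorentz space L_(phi,w), as a set of (representative) functions\<close>
definition orlicz_lorentz :: "'a measure \<Rightarrow> (real \<Rightarrow> real) \<Rightarrow> (real \<Rightarrow> real) \<Rightarrow> ('a \<Rightarrow> complex) set" where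
  "orlicz_lorentz M \<phi> w = {f \<in> borel_measurable M. \<exists>\<alpha>>0.
     set_nn_integral lborel {0<..}
       (\<lambda>t. if decr_rearr M f t = \<infinity> then \<infinity>
            else ennreal (\<phi> (\<alpha> * real_of_ereal (decr_rearr M f t)) * w t)) < \<infinity>}"

definition comp_kernel :: "'a measure \<Rightarrow> ('a \<Rightarrow> complex) set \<Rightarrow> ('a \<Rightarrow> 'a) \<Rightarrow> nat \<Rightarrow> ('a \<Rightarrow> complex) set" where
  "comp_kernel M L \<Psi> m = {f \<in> L. AE x in M. f ((\<Psi> ^^ m) x) = 0}"

definition ascent :: "(nat \<Rightarrow> 'b set) \<Rightarrow> enat" where
  "ascent N = (if \<exists>m. N m = N (Suc m) then enat (LEAST m. N m = N (Suc m)) else \<infinity>)"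

definition nonsingular :: "'a measure \<Rightarrow> ('a \<Rightarrow> 'a) \<Rightarrow> bool" where
  "nonsingular M \<Psi> \<longleftrightarrow> (\<forall>S\<in>sets M. emeasure M S = 0 \<longrightarrow> emeasure M (\<Psi> -` S \<inter> space M) = 0)"

definition equiv_measures :: "'a measure \<Rightarrow> 'a measure \<Rightarrow> bool" where
  "equiv_measures N1 N2 \<longleftrightarrow> absolutely_continuous N1 N2 \<and> absolutely_continuous N2 N1"

end

theory Submission
  imports Defs
begin

text \<open>
  The kernel of C_\<Psi>^m consists of the f in L(\<phi>,w) that vanish \<nu>_m-almost everywhere,
  so it only depends on the null sets of \<nu>_m. Conversely, L(\<phi>,w) contains the indicator of
  every set of finite \<nu>-measure, and by \<sigma>-finiteness a set that is null for one measure but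
  not for another contains such a set with the same property. Hence two of the kernels coincide
  exactly when the corresponding measures are equivalent.
\<close>

lemma equiv_measures_iff_null_sets_eq:
  "equiv_measures N1 N2 \<longleftrightarrow> null_sets N1 = null_sets N2"
  unfolding equiv_measures_def absolutely_continuous_def by auto

lemma AE_eq_0_iff_null_sets:
  fixes f :: "'a \<Rightarrow> 'b::{t1_space, zero}"
  assumes "sets N = sets M" and "f \<in> borel_measurable M"
  shows "(AE x in N. f x = 0) \<longleftrightarrow> {x\<in>space M. f x \<noteq> 0} \<in> null_sets N"
proof -
  have "{x\<in>space M. f x \<noteq> 0} = space M - f -` {0} \<inter> space M" by auto
  also have "\<dots> \<in> sets M"
    using measurable_sets[OF assms(2) borel_closed[OF closed_singleton]] by auto
  finally show ?thesis
    using AE_iff_null[of N "\<lambda>x. f x = 0"] assms(1) sets_eq_imp_space_eq[OF assms(1)] by simp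
qed

lemma comp_kernel_eq_AE_distr:
  assumes "\<Psi> \<in> M \<rightarrow>\<^sub>M M" and "L \<subseteq> borel_measurable M"
  shows "comp_kernel M L \<Psi> m = {f\<in>L. AE x in distr M M (\<Psi> ^^ m). f x = 0}"
proof -
  have "(AE x in distr M M (\<Psi> ^^ m). f x = 0) \<longleftrightarrow> (AE x in M. f ((\<Psi> ^^ m) x) = 0)"
    if "f \<in> borel_measurable M" for f :: "'a \<Rightarrow> complex"
    using that assms(1) by (intro AE_distr_iff) (auto intro: measurable_compose_n)
  then show ?thesis
    using assms(2) unfolding comp_kernel_def by blast
qed

lemma (in sigma_finite_measure) finite_measure_subset_not_null:
  assumes "sets N = sets M" and "S \<in> sets M" and "S \<notin> null_sets N"
  obtains B where "B \<subseteq> S" "B \<in> sets M" "emeasure M B < \<infinity>" "B \<notin> null_sets N"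
proof -
  obtain A :: "nat \<Rightarrow> 'a set" where A: "range A \<subseteq> sets M" "(\<Union>i. A i) = space M"
    "\<And>i. emeasure M (A i) \<noteq> \<infinity>"
    using sigma_finite by metis
  have "S = (\<Union>i. S \<inter> A i)"
    using A(2) sets.sets_into_space[OF assms(2)] by auto
  then obtain i where "S \<inter> A i \<notin> null_sets N"
    using assms(3) by (metis null_sets_UN)
  moreover have "emeasure M (S \<inter> A i) < \<infinity>"
    using emeasure_mono[of "S \<inter> A i" "A i" M] A(1) A(3)[of i] by (auto simp: top.not_eq_extremum)
  ultimately show thesis
    using that[of "S \<inter> A i"] A(1) assms(2) by auto
qed

lemma null_sets_subset_if_AE_zero_subset:
  fixes L :: "('a \<Rightarrow> 'b::{t1_space, zero_neq_one}) set"
  assumes "sigma_finite_measure M" and "sets N1 = sets M" and "sets N2 = sets M"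
    and "L \<subseteq> borel_measurable M"
    and indicator_in: "\<And>B. B \<in> sets M \<Longrightarrow> emeasure M B < \<infinity> \<Longrightarrow> indicator B \<in> L"
    and AE_subset: "{f\<in>L. AE x in N1. f x = 0} \<subseteq> {f\<in>L. AE x in N2. f x = 0}"
  shows "null_sets N1 \<subseteq> null_sets N2"
proof
  fix S assume S: "S \<in> null_sets N1"
  show "S \<in> null_sets N2"
  proof (rule ccontr)
    assume "S \<notin> null_sets N2"
    moreover have "S \<in> sets M" using S assms(2) by auto
    ultimately obtain B where B: "B \<subseteq> S" "B \<in> sets M" "emeasure M B < \<infinity>" "B \<notin> null_sets N2"
      using sigma_finite_measure.finite_measure_subset_not_null[OF assms(1,3)] by metis
    have support: "{x\<in>space M. (indicator B x :: 'b) \<noteq> 0} = B"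
      using sets.sets_into_space[OF B(2)] by (auto simp: indicator_def)
    have "B \<in> null_sets N1" using null_sets_subset[OF S] B(1,2) assms(2) by auto
    then have "indicator B \<in> {f\<in>L. AE x in N1. f x = 0}"
      using indicator_in[OF B(2,3)] assms(2,4) support by (auto simp: AE_eq_0_iff_null_sets)
    then have "indicator B \<in> {f\<in>L. AE x in N2. f x = 0}"
      using AE_subset by blast
    then have "B \<in> null_sets N2"
      using assms(3,4) support by (auto simp: AE_eq_0_iff_null_sets)
    with B(4) show False ..
  qed
qed

lemma AE_zero_eq_iff_null_sets_eq:
  fixes L :: "('a \<Rightarrow> 'b::{t1_space, zero_neq_one}) set"
  assumes "sigma_finite_measure M" and "sets N1 = sets M" and "sets N2 = sets M"
    and "L \<subseteq> borel_measurable M"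
    and "\<And>B. B \<in> sets M \<Longrightarrow> emeasure M B < \<infinity> \<Longrightarrow> indicator B \<in> L"
  shows "{f\<in>L. AE x in N1. f x = 0} = {f\<in>L. AE x in N2. f x = 0} \<longleftrightarrow>
    null_sets N1 = null_sets N2"
proof
  assume "{f\<in>L. AE x in N1. f x = 0} = {f\<in>L. AE x in N2. f x = 0}"
  then show "null_sets N1 = null_sets N2"
    using null_sets_subset_if_AE_zero_subset[OF assms(1,2,3,4,5)]
      null_sets_subset_if_AE_zero_subset[OF assms(1,3,2,4,5)] by blast
next
  assume "null_sets N1 = null_sets N2"
  then show "{f\<in>L. AE x in N1. f x = 0} = {f\<in>L. AE x in N2. f x = 0}"
    using assms(2,3,4) by (auto simp: AE_eq_0_iff_null_sets)
qed

lemma distrib_fun_indicator: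
  assumes "B \<in> sets M" and "s \<ge> 0"
  shows "distrib_fun M (indicator B) s = (if s < 1 then emeasure M B else 0)"
proof -
  have "{x\<in>space M. norm (indicator B x :: complex) > s} = (if s < 1 then B else {})"
    using sets.sets_into_space[OF assms(1)] assms(2) by (auto simp: indicator_def)
  then show ?thesis unfolding distrib_fun_def by simp
qed

lemma decr_rearr_indicator:
  assumes "B \<in> sets M" and "emeasure M B < \<infinity>" and "t \<ge> 0"
  shows "decr_rearr M (indicator B) t = (if t < measure M B then 1 else 0)"
proof -
  have "emeasure M B \<le> ennreal t \<longleftrightarrow> measure M B \<le> t"
    using assms(2,3) by (simp add: emeasure_eq_ennreal_measure less_top ennreal_le_iff)
  then have "{ereal s | s. s > 0 \<and> distrib_fun M (indicator B) s \<le> ennreal t} =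
      ereal ` (if t < measure M B then {1..} else {0<..})"
    using assms(1) by (auto simp: distrib_fun_indicator not_less split: if_splits)
  moreover have "Inf (ereal ` A) = ereal (Inf A)" if "bdd_below A" "A \<noteq> {}" for A :: "real set"
    using ereal_Inf'[OF that] by simp
  ultimately show ?thesis
    unfolding decr_rearr_def by (simp add: one_ereal_def zero_ereal_def)
qed

lemma indicator_in_orlicz_lorentz:
  assumes "young_function \<phi>" and "weight_function w"
    and "B \<in> sets M" and "emeasure M B < \<infinity>"
  shows "indicator B \<in> orlicz_lorentz M \<phi> w"
proof -
  define b where "b = measure M B + 1"
  have "b > 0" unfolding b_def by (simp add: add_nonneg_pos)
  then have "set_integrable lborel {0<..b} (\<lambda>t. \<phi> 1 * w t)"
    using assms(2) unfolding weight_function_def by (auto intro: set_integrable_mult_right)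
  then have "(\<integral>\<^sup>+ t. ennreal (norm (indicator {0<..b} t *\<^sub>R (\<phi> 1 * w t))) \<partial>lborel) < \<infinity>"
    unfolding set_integrable_def integrable_iff_bounded by simp
  moreover have "set_nn_integral lborel {0<..}
       (\<lambda>t. if decr_rearr M (indicator B) t = \<infinity> then \<infinity>
            else ennreal (\<phi> (1 * real_of_ereal (decr_rearr M (indicator B) t)) * w t))
     \<le> (\<integral>\<^sup>+ t. ennreal (norm (indicator {0<..b} t *\<^sub>R (\<phi> 1 * w t))) \<partial>lborel)"
    using assms(1) unfolding young_function_def b_def
    by (intro nn_integral_mono)
      (auto simp: decr_rearr_indicator[OF assms(3,4)] indicator_def intro: ennreal_leI)
  ultimately show ?thesis
    using assms(3) unfolding orlicz_lorentz_def by (auto intro!: exI[of _ 1])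
qed

theorem theorem3p5:
  fixes M :: "'a measure" and \<phi> w :: "real \<Rightarrow> real" and \<Psi> :: "'a \<Rightarrow> 'a"
  assumes "sigma_finite_measure M"
    and "young_function \<phi>" and "delta2 \<phi>"
    and "weight_function w"
    and "\<Psi> \<in> M \<rightarrow>\<^sub>M M" and "nonsingular M \<Psi>"
    and "\<forall>f\<in>orlicz_lorentz M \<phi> w. f \<circ> \<Psi> \<in> orlicz_lorentz M \<phi> w"
  shows "ascent (comp_kernel M (orlicz_lorentz M \<phi> w) \<Psi>) = \<infinity> \<longleftrightarrow>
    (\<forall>m::nat. \<not> equiv_measures (distr M M (\<Psi> ^^ m)) (distr M M (\<Psi> ^^ Suc m)))"
proof -
  let ?L = "orlicz_lorentz M \<phi> w"
  have L_measurable: "?L \<subseteq> borel_measurable M"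
    unfolding orlicz_lorentz_def by auto
  have "comp_kernel M ?L \<Psi> m = comp_kernel M ?L \<Psi> (Suc m) \<longleftrightarrow>
      equiv_measures (distr M M (\<Psi> ^^ m)) (distr M M (\<Psi> ^^ Suc m))" for m
    unfolding comp_kernel_eq_AE_distr[OF assms(5) L_measurable] equiv_measures_iff_null_sets_eq
    using AE_zero_eq_iff_null_sets_eq[OF assms(1) _ _ L_measurable indicator_in_orlicz_lorentz[OF assms(2,4)]]
    by simp
  then show ?thesis
    unfolding ascent_def by auto
qed

end
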